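(* Let $H(x,y)=\frac{y^2}{2}-\frac{x^2}{2}+\frac{x^4}{4}$. For $h>0$ let $\gamma(h)\subset\{H=h\}$ be the exterior oval of the real level set, oriented by the Hamiltonian vector field $\dot x=y,\ \dot y=x-x^3$. Define $I_0(h)=\oint_{\gamma(h)} y\,dx$ for $h>0$, and let $I_0$ also denote its analytic continuation to the complex domain $\mathcal D=\mathbb C\setminus(-\infty,0]$. Then neither $I_0(h)$ nor its derivative $I_0'(h)$ vanishes at any point $h\in\mathcal D$.
   Context: The integral $I_0(h)$, defined for real $h>0$, extends to a single-valued analytic function on $\mathcal D=\mathbb C\setminus(-\infty,0]$ (by continuous deformation of the cycle $\gamma(h)$ on the complex curve $\{(x,y)\in\mathbb C^2: H(x,y)=h\}$); the derivative $I_0'$ is that of this analytic continuation. *)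

theory Defs
  imports "HOL-Complex_Analysis.Complex_Analysis"
begin

definition Ham :: "real \<Rightarrow> real \<Rightarrow> real" where
  "Ham x y = y^2/2 - x^2/2 + x^4/4"

text \<open>For h > 0 the real level set {H = h} is a single closed oval (the exterior oval),
  given by y = +/- sqrt(2 (h - V x)) with V x = Ham x 0 = -x^2/2 + x^4/4, for x in the interval
  where h - V x \<ge> 0.  Oriented by x' = y, y' = x - x^3, the upper branch is traversed
  left to right and the lower branch right to left, so the line integral of y dx equals
  twice the integral of the upper branch.\<close>
definition oval_xrange :: "real \<Rightarrow> real set" where
  "oval_xrange h = {x::real. Ham x 0 \<le> h}"

definition I0 :: "real \<Rightarrow> real" where
  "I0 h = 2 * integral (oval_xrange h) (\<lambda>x. sqrt (2 * (h - Ham x 0)))"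

definition slitD :: "complex set" where
  "slitD = - complex_of_real ` {..0}"

end

theory Submission
  imports Defs
begin

text \<open>
  With \<open>\<sigma> = sqrt (1 + 4 h)\<close> the oval meets the x-axis at \<open>\<plusminus>sqrt (\<sigma> + 1)\<close>, and the
  substitution \<open>x = sqrt (\<sigma> + 1) sin t\<close> gives
  \<open>I0 h = sqrt 2 (\<sigma> + 1) J \<sigma>\<close> with \<open>J s = \<integral> cos\<^sup>2 t sqrt ((s + 1) sin\<^sup>2 t + s - 1) dt\<close>
  over \<open>[-\<pi>/2, \<pi>/2]\<close>.  For \<open>s\<close> off \<open>(-\<infinity>, 1]\<close> the radicand avoids \<open>(-\<infinity>, 0]\<close>, so with the
  principal square root this formula is holomorphic in \<open>s\<close>, and \<open>z \<mapsto> csqrt (1 + 4 z)\<close> maps the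
  slit plane into that region; this is the continuation of \<open>I0\<close>, and by the identity theorem
  the only one.  An integration by parts shows that its derivative is \<open>2 sqrt 2 P \<sigma>\<close> with
  \<open>P s = \<integral> 1 / sqrt ((s + 1) sin\<^sup>2 t + s - 1) dt\<close>.  Both \<open>J\<close> and \<open>P\<close> have integrands with
  positive real part, because the principal square root of a point off \<open>(-\<infinity>, 0]\<close> lies in the
  open right half-plane, and so neither the continuation nor its derivative vanishes.
\<close>

subsection \<open>Slit planes\<close>

lemma slitD_eq_Compl_nonpos_Reals: "slitD = - \<real>\<^sub>\<le>\<^sub>0"
  unfolding slitD_def nonpos_Reals_def by auto

lemma open_slitD: "open slitD"
  by (simp add: slitD_eq_Compl_nonpos_Reals closed_nonpos_Reals_complex open_Compl)

lemma connected_slitD: "connected slitD"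
  unfolding slitD_def by (rule starlike_imp_connected[OF starlike_slotted_complex_plane_left])

lemma holomorphic_on_slitD_eqI:
  assumes "f holomorphic_on slitD" "g holomorphic_on slitD"
    and "\<And>h::real. h > 0 \<Longrightarrow> f (of_real h) = g (of_real h)"
    and "z \<in> slitD"
  shows "f z = g z"
proof -
  let ?U = "complex_of_real ` {0<..}"
  have "(1::real) islimpt {0<..}"
    by (intro interior_limit_point) (auto simp: interior_open)
  then have "complex_of_real 1 islimpt ?U"
    by (intro islimpt_isCont_image continuous_intros) (auto simp: eventually_at_filter)
  then have limpt: "1 islimpt ?U"
    by simp
  have "(\<lambda>w. f w - g w) z = 0"
  proof (rule analytic_continuation[where f = "\<lambda>w. f w - g w" and S = slitD and U = ?U
        and \<xi> = 1 and w = z])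
    show "(\<lambda>w. f w - g w) holomorphic_on slitD"
      using assms(1,2) by (rule holomorphic_on_diff)
    show "?U \<subseteq> slitD" "1 \<in> slitD"
      by (auto simp: slitD_eq_Compl_nonpos_Reals complex_nonpos_Reals_iff)
    show "f u - g u = 0" if "u \<in> ?U" for u
      using that assms(3) by auto
  qed (use open_slitD connected_slitD limpt assms(4) in simp_all)
  then show ?thesis by simp
qed

definition slit_one :: "complex set" where
  "slit_one = - complex_of_real ` {..1}"

lemma mem_slit_one_iff: "s \<in> slit_one \<longleftrightarrow> Im s \<noteq> 0 \<or> Re s > 1"
  unfolding slit_one_def by (auto simp: image_iff complex_eq_iff)

lemma open_slit_one: "open slit_one"
proof -
  have "slit_one = {s. Im s \<noteq> 0} \<union> {s. Re s > 1}"
    using mem_slit_one_iff by auto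
  moreover have "open {s. Im s \<noteq> 0}" "open {s::complex. Re s > 1}"
    by (intro open_Collect_neq open_Collect_less continuous_intros)+
  ultimately show ?thesis
    by (metis open_Un)
qed

definition sqrt_disc :: "complex \<Rightarrow> complex" where
  "sqrt_disc z = csqrt (1 + 4 * z)"

lemma sqrt_disc_of_real: "h > 0 \<Longrightarrow> sqrt_disc (of_real h) = of_real (sqrt (1 + 4 * h))"
  unfolding sqrt_disc_def by simp

lemma
  assumes "z \<in> slitD"
  shows disc_notin_nonpos_Reals: "1 + 4 * z \<notin> \<real>\<^sub>\<le>\<^sub>0"
    and sqrt_disc_in_slit_one: "sqrt_disc z \<in> slit_one"
proof -
  have "z \<notin> \<real>\<^sub>\<le>\<^sub>0"
    using assms by (simp add: slitD_eq_Compl_nonpos_Reals)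
  then have z: "Im z \<noteq> 0 \<or> Re z > 0"
    by (auto simp: complex_nonpos_Reals_iff)
  then show "1 + 4 * z \<notin> \<real>\<^sub>\<le>\<^sub>0"
    by (auto simp: complex_nonpos_Reals_iff)
  show "sqrt_disc z \<in> slit_one"
  proof (rule ccontr)
    assume "sqrt_disc z \<notin> slit_one"
    then have "Im (sqrt_disc z) = 0" "Re (sqrt_disc z) \<le> 1"
      by (auto simp: mem_slit_one_iff)
    moreover have "Im ((sqrt_disc z)^2) = 4 * Im z" "Re ((sqrt_disc z)^2) = 1 + 4 * Re z"
      unfolding sqrt_disc_def by simp_all
    moreover have "Re (sqrt_disc z) \<ge> 0"
      unfolding sqrt_disc_def by (rule Re_csqrt)
    ultimately show False
      using z by (simp add: power2_eq_square) (smt (verit) mult_le_one)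
  qed
qed

lemma has_field_derivative_sqrt_disc:
  assumes "z \<in> slitD"
  shows "(sqrt_disc has_field_derivative 2 / sqrt_disc z) (at z)"
proof -
  have "((\<lambda>z. 1 + 4 * z) has_field_derivative 4) (at z)"
    by (auto intro!: derivative_eq_intros)
  from has_field_derivative_csqrt'[OF this disc_notin_nonpos_Reals[OF assms]]
  show ?thesis
    unfolding sqrt_disc_def[abs_def] by (simp add: sqrt_disc_def)
qed

subsection \<open>Positive real parts\<close>

lemma Re_csqrt_pos:
  assumes "v \<notin> \<real>\<^sub>\<le>\<^sub>0"
  shows "Re (csqrt v) > 0"
proof (rule ccontr)
  assume "\<not> Re (csqrt v) > 0"
  then have "Re (csqrt v) = 0"
    using Re_csqrt[of v] by simp
  then have "v = complex_of_real (- ((Im (csqrt v))^2))"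
    by (subst power2_csqrt[symmetric]) (simp add: complex_eq_iff power2_eq_square)
  then have "v \<in> \<real>\<^sub>\<le>\<^sub>0"
    by (metis nonpos_Reals_of_real_iff neg_le_0_iff_le zero_le_power2)
  with assms show False by simp
qed

lemma Re_inverse_pos:
  fixes w :: complex
  assumes "Re w > 0"
  shows "Re (1 / w) > 0"
proof -
  have "(Re w)^2 + (Im w)^2 > 0"
    using assms by (simp add: add_pos_nonneg)
  then show ?thesis
    using assms by (simp add: Re_divide power2_eq_square)
qed

lemma Re_integral_pos:
  fixes f :: "real \<Rightarrow> complex"
  assumes "a < b" and cont: "continuous_on {a..b} f"
    and pos: "\<And>t. t \<in> {a<..<b} \<Longrightarrow> Re (f t) > 0"
  shows "Re (integral {a..b} f) > 0"
proof -
  have "((\<lambda>t. Re (f t)) has_integral Re (integral {a..b} f)) {a..b}"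
    using cont by (intro has_integral_Re integrable_integral integrable_continuous_interval)
  then have "Re (integral {a..b} f) = integral {a..b} (\<lambda>t. Re (f t))"
    by (simp add: integral_unique)
  also have "integral {a..b} (\<lambda>t. 0) < \<dots>"
    using assms by (intro integral_less_real continuous_on_Re cont continuous_on_const) auto
  finally show ?thesis by simp
qed

definition radicand :: "complex \<Rightarrow> real \<Rightarrow> complex" where
  "radicand s t = (s + 1) * of_real ((sin t)^2) + s - 1"

lemma radicand_notin_nonpos_Reals:
  assumes "s \<in> slit_one"
  shows "radicand s t \<notin> \<real>\<^sub>\<le>\<^sub>0"
proof
  assume "radicand s t \<in> \<real>\<^sub>\<le>\<^sub>0"
  then have Im0: "Im s * (1 + (sin t)^2) = 0" and Re_le: "(Re s + 1) * (sin t)^2 + Re s - 1 \<le> 0"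
    by (auto simp: complex_nonpos_Reals_iff radicand_def algebra_simps)
  from Im0 have "Im s = 0"
    by (smt (verit) mult_eq_0_iff zero_le_power2)
  with assms have "Re s > 1"
    by (simp add: mem_slit_one_iff)
  with Re_le show False
    by (smt (verit) mult_nonneg_nonneg zero_le_power2)
qed

lemma csqrt_radicand_nonzero: "s \<in> slit_one \<Longrightarrow> csqrt (radicand s t) \<noteq> 0"
  using radicand_notin_nonpos_Reals by (metis csqrt_eq_0 nonpos_Reals_zero_I)

lemma continuous_on_csqrt_radicand:
  "continuous_on (slit_one \<times> UNIV) (\<lambda>(s, t). csqrt (radicand s t))"
  unfolding case_prod_beta
proof (rule continuous_on_compose2[OF continuous_on_csqrt])
  show "continuous_on (slit_one \<times> UNIV) (\<lambda>p. radicand (fst p) (snd p))"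
    unfolding radicand_def by (intro continuous_intros)
  show "(\<lambda>p. radicand (fst p) (snd p)) ` (slit_one \<times> UNIV) \<subseteq> - \<real>\<^sub>\<le>\<^sub>0"
    using radicand_notin_nonpos_Reals by auto
qed

lemma continuous_on_csqrt_radicand_in_t:
  assumes "s \<in> slit_one"
  shows "continuous_on A (\<lambda>t. csqrt (radicand s t))"
proof -
  have "continuous_on A (\<lambda>t. (s, t))"
    by (intro continuous_intros)
  with assms show ?thesis
    using continuous_on_compose2[OF continuous_on_csqrt_radicand, of A "\<lambda>t. (s, t)"] by auto
qed

definition J :: "complex \<Rightarrow> complex" where
  "J s = integral {-(pi/2)..pi/2} (\<lambda>t. of_real ((cos t)^2) * csqrt (radicand s t))"

definition J' :: "complex \<Rightarrow> complex" where
  "J' s = integral {-(pi/2)..pi/2}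
     (\<lambda>t. of_real ((cos t)^2 * (1 + (sin t)^2)) / (2 * csqrt (radicand s t)))"

definition P :: "complex \<Rightarrow> complex" where
  "P s = integral {-(pi/2)..pi/2} (\<lambda>t. 1 / csqrt (radicand s t))"

lemma
  assumes "s \<in> slit_one"
  shows has_integral_J:
      "((\<lambda>t. of_real ((cos t)^2) * csqrt (radicand s t)) has_integral J s) {-(pi/2)..pi/2}"
    and has_integral_J':
      "((\<lambda>t. of_real ((cos t)^2 * (1 + (sin t)^2)) / (2 * csqrt (radicand s t)))
         has_integral J' s) {-(pi/2)..pi/2}"
    and has_integral_P:
      "((\<lambda>t. 1 / csqrt (radicand s t)) has_integral P s) {-(pi/2)..pi/2}"
  using continuous_on_csqrt_radicand_in_t[OF assms] csqrt_radicand_nonzero[OF assms]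
  unfolding J_def J'_def P_def
  by (auto intro!: integrable_integral integrable_continuous_interval continuous_intros)

lemma has_field_derivative_J:
  assumes "s0 \<in> slit_one"
  shows "(J has_field_derivative J' s0) (at s0)"
proof -
  obtain r where r: "r > 0" "ball s0 r \<subseteq> slit_one"
    using open_slit_one assms open_contains_ball by blast
  have "((\<lambda>s. integral (cbox (-(pi/2)) (pi/2)) (\<lambda>t. of_real ((cos t)^2) * csqrt (radicand s t)))
     has_field_derivative integral (cbox (-(pi/2)) (pi/2))
       (\<lambda>t. of_real ((cos t)^2 * (1 + (sin t)^2)) / (2 * csqrt (radicand s0 t)))) (at s0 within ball s0 r)"
  proof (rule leibniz_rule_field_derivative[where
        fx = "\<lambda>s t. of_real ((cos t)^2 * (1 + (sin t)^2)) / (2 * csqrt (radicand s t))"])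
    fix s t assume "s \<in> ball s0 r"
    then have "radicand s t \<notin> \<real>\<^sub>\<le>\<^sub>0"
      using r radicand_notin_nonpos_Reals by auto
    then show "((\<lambda>s. of_real ((cos t)\<^sup>2) * csqrt (radicand s t)) has_field_derivative
        of_real ((cos t)\<^sup>2 * (1 + (sin t)\<^sup>2)) / (2 * csqrt (radicand s t))) (at s within ball s0 r)"
      unfolding radicand_def by (auto intro!: derivative_eq_intros simp: algebra_simps)
  next
    fix s assume "s \<in> ball s0 r"
    then show "(\<lambda>t. of_real ((cos t)\<^sup>2) * csqrt (radicand s t)) integrable_on cbox (-(pi/2)) (pi/2)"
      using r has_integral_J[of s] by (auto simp: has_integral_integrable)
  next
    show "continuous_on (ball s0 r \<times> cbox (-(pi/2)) (pi/2))
        (\<lambda>(s, t). of_real ((cos t)\<^sup>2 * (1 + (sin t)\<^sup>2)) / (2 * csqrt (radicand s t)))"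
      using r csqrt_radicand_nonzero unfolding case_prod_beta
      by (intro continuous_intros continuous_on_subset[OF continuous_on_csqrt_radicand[unfolded case_prod_beta]])
         auto
  qed (use r in auto)
  then show ?thesis
    unfolding J_def J'_def cbox_interval using at_within_open[of s0 "ball s0 r"] r by auto
qed

text \<open>The integration by parts behind \<open>J s + (s + 1) J' s = s P s\<close>: with
  \<open>q\<^sup>2 = (s + 1) a\<^sup>2 + s - 1\<close>, \<open>a = sin t\<close>, \<open>b = cos t\<close>, the left-hand side below is half the
  \<open>t\<close>-derivative of \<open>a b q\<close>, which vanishes at \<open>t = \<plusminus>\<pi>/2\<close>.\<close>

lemma integration_by_parts_identity:
  fixes q s :: complex and a b :: real
  assumes q: "q \<noteq> 0" "q^2 = (s + 1) * of_real (a^2) + s - 1" and ab: "a^2 + b^2 = 1"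
  shows "((s + 1) * of_real (2 * a * b) / (2 * q) * of_real (a * b) + of_real (b^2 - a^2) * q) / 2
    = of_real (b^2) * q + (s + 1) * (of_real (b^2 * (1 + a^2)) / (2 * q)) - s * (1 / q)"
proof -
  let ?a = "complex_of_real a" and ?b = "complex_of_real b"
  have ab': "?a^2 + ?b^2 = 1"
    by (metis ab of_real_1 of_real_add of_real_power)
  have "q * (((s + 1) * of_real (2 * a * b) / (2 * q) * of_real (a * b) + of_real (b^2 - a^2) * q) / 2)
      = ((s + 1) * ?a^2 * ?b^2 + (?b^2 - ?a^2) * q^2) / 2"
    using q(1) by (simp add: field_simps power2_eq_square)
  also have "\<dots> = ?b^2 * q^2 + (s + 1) * (?b^2 * (1 + ?a^2)) / 2 - s"
    using q(2) ab' by simp algebra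
  also have "\<dots> = q * (of_real (b^2) * q + (s + 1) * (of_real (b^2 * (1 + a^2)) / (2 * q)) - s * (1 / q))"
    using q(1) by (simp add: field_simps power2_eq_square)
  finally show ?thesis
    using q(1) by simp
qed

lemma has_vector_derivative_sin_cos_csqrt_radicand:
  assumes "s \<in> slit_one"
  shows "((\<lambda>t. of_real (sin t * cos t) * csqrt (radicand s t)) has_vector_derivative
     (s + 1) * of_real (2 * sin t * cos t) / (2 * csqrt (radicand s t)) * of_real (sin t * cos t)
      + of_real ((cos t)^2 - (sin t)^2) * csqrt (radicand s t)) (at t within A)"
proof -
  have "((\<lambda>t. (sin t)^2) has_real_derivative 2 * sin t * cos t) (at t within A)"
    by (auto intro!: derivative_eq_intros)
  then have "((\<lambda>t. complex_of_real ((sin t)^2)) has_vector_derivative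
      complex_of_real (2 * sin t * cos t)) (at t within A)"
    by (rule has_vector_derivative_of_real)
  then have "((\<lambda>t. (s + 1) * of_real ((sin t)^2) + s - 1) has_vector_derivative
      (s + 1) * of_real (2 * sin t * cos t) + 0 - 0) (at t within A)"
    by (intro has_vector_derivative_diff has_vector_derivative_add has_vector_derivative_mult_right
        has_vector_derivative_const)
  then have dr: "((\<lambda>t. radicand s t) has_vector_derivative (s + 1) * of_real (2 * sin t * cos t))
      (at t within A)"
    by (simp add: radicand_def)
  have dc: "(csqrt has_field_derivative inverse (2 * csqrt (radicand s t)))
      (at (radicand s t) within (\<lambda>t. radicand s t) ` A)"
    using has_field_derivative_csqrt[OF radicand_notin_nonpos_Reals[OF assms]]
    by (rule has_field_derivative_at_within)
  have d2: "((\<lambda>t. csqrt (radicand s t)) has_vector_derivative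
      (s + 1) * of_real (2 * sin t * cos t) * inverse (2 * csqrt (radicand s t))) (at t within A)"
    using field_vector_diff_chain_within[OF dr dc] by (simp add: o_def)
  have d1: "((\<lambda>t. complex_of_real (sin t * cos t)) has_vector_derivative
      complex_of_real ((cos t)^2 - (sin t)^2)) (at t within A)"
    by (auto intro!: derivative_eq_intros simp: power2_eq_square)
  show ?thesis
    by (rule has_vector_derivative_eq_rhs[OF has_vector_derivative_mult[OF d1 d2]])
       (simp only: divide_inverse mult_ac)
qed

lemma J_plus_J'_eq_P:
  assumes s: "s \<in> slit_one"
  shows "J s + (s + 1) * J' s = s * P s"
proof -
  let ?I = "{-(pi/2)..pi/2}"
  let ?q = "\<lambda>t. csqrt (radicand s t)"
  let ?d = "\<lambda>t. (s + 1) * of_real (2 * sin t * cos t) / (2 * ?q t) * of_real (sin t * cos t)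
      + of_real ((cos t)^2 - (sin t)^2) * ?q t"
  let ?g = "\<lambda>t. of_real ((cos t)^2) * ?q t
      + (s + 1) * (of_real ((cos t)^2 * (1 + (sin t)^2)) / (2 * ?q t)) - s * (1 / ?q t)"
  have "(?d has_integral of_real (sin (pi/2) * cos (pi/2)) * ?q (pi/2)
      - of_real (sin (-(pi/2)) * cos (-(pi/2))) * ?q (-(pi/2))) ?I"
    by (rule fundamental_theorem_of_calculus, simp, rule has_vector_derivative_sin_cos_csqrt_radicand[OF s])
  then have "(?d has_integral 0) ?I"
    by simp
  then have "((\<lambda>t. ?d t / 2) has_integral 0) ?I"
    using has_integral_divide[of ?d 0 ?I 2] by simp
  moreover have "?d t / 2 = ?g t" for t
    using csqrt_radicand_nonzero[OF s]
    by (intro integration_by_parts_identity) (simp_all add: radicand_def)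
  ultimately have "(?g has_integral 0) ?I"
    by (simp only:)
  moreover have "(?g has_integral J s + (s + 1) * J' s - s * P s) ?I"
    using s by (intro has_integral_diff has_integral_add has_integral_mult_right
        has_integral_J has_integral_J' has_integral_P)
  ultimately have "J s + (s + 1) * J' s - s * P s = 0"
    by (rule has_integral_unique[rotated])
  then show ?thesis
    by simp
qed

lemma Re_J_pos:
  assumes s: "s \<in> slit_one"
  shows "Re (J s) > 0"
  unfolding J_def
proof (rule Re_integral_pos)
  show "continuous_on {-(pi/2)..pi/2} (\<lambda>t. of_real ((cos t)^2) * csqrt (radicand s t))"
    by (intro continuous_intros continuous_on_csqrt_radicand_in_t s)
  fix t :: real assume "t \<in> {-(pi/2)<..<pi/2}"
  then have "cos t > 0"
    by (auto intro: cos_gt_zero_pi)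
  moreover have "Re (csqrt (radicand s t)) > 0"
    by (intro Re_csqrt_pos radicand_notin_nonpos_Reals s)
  ultimately show "Re (of_real ((cos t)^2) * csqrt (radicand s t)) > 0"
    by simp
qed simp

lemma Re_P_pos:
  assumes s: "s \<in> slit_one"
  shows "Re (P s) > 0"
  unfolding P_def
proof (rule Re_integral_pos)
  show "continuous_on {-(pi/2)..pi/2} (\<lambda>t. 1 / csqrt (radicand s t))"
    using csqrt_radicand_nonzero[OF s]
    by (intro continuous_intros continuous_on_csqrt_radicand_in_t s) auto
  show "Re (1 / csqrt (radicand s t)) > 0" for t
    by (intro Re_inverse_pos Re_csqrt_pos radicand_notin_nonpos_Reals s)
qed simp

subsection \<open>The continuation of \<open>I0\<close>\<close>

definition I0_ext :: "complex \<Rightarrow> complex" where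
  "I0_ext z = of_real (sqrt 2) * ((sqrt_disc z + 1) * J (sqrt_disc z))"

lemma has_field_derivative_I0_ext:
  assumes z: "z \<in> slitD"
  shows "(I0_ext has_field_derivative of_real (sqrt 2) * (2 * P (sqrt_disc z))) (at z)"
proof -
  let ?q = "sqrt_disc z"
  have q: "?q \<in> slit_one" "?q \<noteq> 0"
    using sqrt_disc_in_slit_one[OF z] by (auto simp: mem_slit_one_iff)
  have dJ: "((\<lambda>z. J (sqrt_disc z)) has_field_derivative J' ?q * (2 / ?q)) (at z)"
    by (rule DERIV_chain2[OF has_field_derivative_J[OF q(1)] has_field_derivative_sqrt_disc[OF z]])
  have "(I0_ext has_field_derivative
      of_real (sqrt 2) * ((?q + 1) * (J' ?q * (2 / ?q)) + (2 / ?q + 0) * J ?q)) (at z)"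
    unfolding I0_ext_def[abs_def]
    by (intro DERIV_cmult DERIV_mult' DERIV_add has_field_derivative_sqrt_disc z DERIV_const dJ)
  also have "(?q + 1) * (J' ?q * (2 / ?q)) + (2 / ?q + 0) * J ?q = (2 / ?q) * (J ?q + (?q + 1) * J' ?q)"
    using q(2) by (simp add: field_simps)
  also have "\<dots> = 2 * P ?q"
    using q by (simp add: J_plus_J'_eq_P)
  finally show ?thesis .
qed

lemma holomorphic_on_I0_ext: "I0_ext holomorphic_on slitD"
  using has_field_derivative_I0_ext open_slitD by (auto simp: holomorphic_on_open)

lemma I0_ext_nonzero:
  assumes "z \<in> slitD"
  shows "I0_ext z \<noteq> 0"
proof -
  have "Re (sqrt_disc z) \<ge> 0"
    unfolding sqrt_disc_def by (rule Re_csqrt)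
  then have "Re (sqrt_disc z + 1) > 0"
    by simp
  then have "sqrt_disc z + 1 \<noteq> 0"
    by (metis order_less_irrefl zero_complex.sel(1))
  moreover have "Re (J (sqrt_disc z)) > 0"
    by (intro Re_J_pos sqrt_disc_in_slit_one assms)
  ultimately show ?thesis
    unfolding I0_ext_def by auto
qed

subsection \<open>Agreement with \<open>I0\<close> on the positive reals\<close>

lemma oval_xrange_eq:
  assumes h: "h > 0"
  shows "oval_xrange h = {- sqrt (sqrt (1 + 4 * h) + 1) .. sqrt (sqrt (1 + 4 * h) + 1)}"
proof -
  define \<sigma> where "\<sigma> = sqrt (1 + 4 * h)"
  have \<sigma>: "\<sigma> > 1" "\<sigma>^2 = 1 + 4 * h"
    unfolding \<sigma>_def using h by auto
  have "Ham x 0 \<le> h \<longleftrightarrow> \<bar>x\<bar> \<le> sqrt (\<sigma> + 1)" for x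
  proof -
    have "Ham x 0 \<le> h \<longleftrightarrow> (x^2 - 1)^2 \<le> \<sigma>^2"
      unfolding \<sigma>(2) Ham_def by (simp add: power2_eq_square power4_eq_xxxx algebra_simps)
    also have "\<dots> \<longleftrightarrow> \<bar>x^2 - 1\<bar> \<le> \<sigma>"
      using \<sigma>(1) abs_le_square_iff[of "x^2 - 1" \<sigma>] by simp
    also have "\<dots> \<longleftrightarrow> x^2 \<le> \<sigma> + 1"
      using \<sigma>(1) by (smt (verit) zero_le_power2)
    also have "\<dots> \<longleftrightarrow> \<bar>x\<bar> \<le> sqrt (\<sigma> + 1)"
      using \<sigma>(1) by (simp add: real_le_rsqrt sqrt_le_D real_sqrt_abs[symmetric] del: real_sqrt_abs)
    finally show ?thesis .
  qed
  then have "x \<in> oval_xrange h \<longleftrightarrow> x \<in> {- sqrt (\<sigma> + 1) .. sqrt (\<sigma> + 1)}" for x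
    unfolding oval_xrange_def by (simp add: abs_le_iff) linarith
  then show ?thesis
    unfolding \<sigma>_def by blast
qed

lemma oval_integrand_sin_substitution:
  fixes A \<sigma> h t :: real
  assumes A: "A^2 = \<sigma> + 1" "A \<ge> 0" and \<sigma>: "\<sigma>^2 = 1 + 4 * h" "\<sigma> > 1" and cos: "cos t \<ge> 0"
  shows "(A * cos t) * sqrt (2 * (h - Ham (A * sin t) 0))
    = (\<sigma> + 1) * ((cos t)^2 * sqrt ((\<sigma> + 1) * (sin t)^2 + \<sigma> - 1)) / sqrt 2"
proof -
  let ?w = "(\<sigma> + 1) * (sin t)^2 + \<sigma> - 1"
  have w: "?w \<ge> 0"
    using \<sigma> by (smt (verit) zero_le_power2 mult_nonneg_nonneg)
  have "2 * (h - Ham (A * sin t) 0) = 2 * h + A^2 * (sin t)^2 - (A^2)^2 * ((sin t)^2)^2 / 2"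
    unfolding Ham_def by (simp add: power_mult_distrib algebra_simps power2_eq_square power4_eq_xxxx)
  also have "\<dots> = (A * cos t)^2 * ?w / 2"
  proof -
    have h: "h = (\<sigma>^2 - 1) / 4"
      using \<sigma>(1) by simp
    show ?thesis
      unfolding power_mult_distrib A(1) cos_squared_eq h by (simp add: field_simps power2_eq_square)
  qed
  also have "\<dots> = ((A * cos t) * sqrt ?w / sqrt 2)^2"
    using w by (simp add: power_divide power_mult_distrib)
  finally have "sqrt (2 * (h - Ham (A * sin t) 0)) = \<bar>(A * cos t) * sqrt ?w / sqrt 2\<bar>"
    by (simp only: real_sqrt_abs)
  also have "\<dots> = (A * cos t) * sqrt ?w / sqrt 2"
    using A(2) cos w by (intro abs_of_nonneg divide_nonneg_pos mult_nonneg_nonneg) auto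
  finally show ?thesis
    by (simp add: power2_eq_square flip: A(1))
qed

lemma integral_oval_sin_substitution:
  fixes A \<sigma> h :: real
  assumes A: "A^2 = \<sigma> + 1" "A \<ge> 0" and \<sigma>: "\<sigma>^2 = 1 + 4 * h" "\<sigma> > 1"
  shows "integral {-A..A} (\<lambda>x. sqrt (2 * (h - Ham x 0))) = (\<sigma> + 1)
    * integral {-(pi/2)..pi/2} (\<lambda>t. (cos t)^2 * sqrt ((\<sigma> + 1) * (sin t)^2 + \<sigma> - 1)) / sqrt 2"
proof -
  let ?f = "\<lambda>x. sqrt (2 * (h - Ham x 0))"
  let ?k = "\<lambda>t. (\<sigma> + 1) * ((cos t)^2 * sqrt ((\<sigma> + 1) * (sin t)^2 + \<sigma> - 1)) / sqrt 2"
  have "((\<lambda>t. (A * cos t) *\<^sub>R ?f (A * sin t)) has_integral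
      integral {A * sin (-(pi/2))..A * sin (pi/2)} ?f) {-(pi/2)..pi/2}"
  proof (rule has_integral_substitution[where c = "-A" and d = A])
    show "(\<lambda>t. A * sin t) ` {-(pi/2)..pi/2} \<subseteq> {-A..A}"
    proof clarify
      fix t
      have "\<bar>A * sin t\<bar> \<le> A"
        using A(2) by (simp add: abs_mult mult_left_le)
      then show "A * sin t \<in> {-A..A}"
        by (simp add: abs_le_iff)
    qed
    show "continuous_on {-A..A} ?f"
      unfolding Ham_def by (intro continuous_intros) auto
    show "((\<lambda>t. A * sin t) has_real_derivative A * cos t) (at t within {-(pi/2)..pi/2})" for t
      by (auto intro!: derivative_eq_intros)
  qed (use A in auto)
  then have "((\<lambda>t. (A * cos t) *\<^sub>R ?f (A * sin t)) has_integral integral {-A..A} ?f) {-(pi/2)..pi/2}"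
    by simp
  then have "(?k has_integral integral {-A..A} ?f) {-(pi/2)..pi/2}"
  proof (rule has_integral_eq[rotated])
    fix t :: real assume "t \<in> {-(pi/2)..pi/2}"
    then have "cos t \<ge> 0"
      by (auto intro: cos_ge_zero)
    then show "(A * cos t) *\<^sub>R ?f (A * sin t) = ?k t"
      using oval_integrand_sin_substitution[OF A \<sigma>] by simp
  qed
  moreover have "(?k has_integral (\<sigma> + 1) * integral {-(pi/2)..pi/2}
      (\<lambda>t. (cos t)^2 * sqrt ((\<sigma> + 1) * (sin t)^2 + \<sigma> - 1)) / sqrt 2) {-(pi/2)..pi/2}"
    by (intro has_integral_divide has_integral_mult_right integrable_integral
        integrable_continuous_interval continuous_intros)
  ultimately show ?thesis
    by (rule has_integral_unique)
qed

lemma I0_eq_integral: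
  assumes h: "h > 0"
  defines "\<sigma> \<equiv> sqrt (1 + 4 * h)"
  shows "I0 h = sqrt 2 * (\<sigma> + 1)
    * integral {-(pi/2)..pi/2} (\<lambda>t. (cos t)^2 * sqrt ((\<sigma> + 1) * (sin t)^2 + \<sigma> - 1))"
proof -
  define A where "A = sqrt (\<sigma> + 1)"
  have \<sigma>: "\<sigma>^2 = 1 + 4 * h" "\<sigma> > 1"
    unfolding \<sigma>_def using h by auto
  have A: "A^2 = \<sigma> + 1" "A \<ge> 0"
    unfolding A_def using \<sigma> by auto
  have sqrt2_times: "2 * (c / sqrt 2) = sqrt 2 * c" for c :: real
    by (simp add: field_simps)
  have "oval_xrange h = {-A..A}"
    unfolding A_def \<sigma>_def by (rule oval_xrange_eq[OF h])
  then have "I0 h = 2 * integral {-A..A} (\<lambda>x. sqrt (2 * (h - Ham x 0)))"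
    unfolding I0_def by simp
  also have "\<dots> = sqrt 2 * (\<sigma> + 1)
      * integral {-(pi/2)..pi/2} (\<lambda>t. (cos t)^2 * sqrt ((\<sigma> + 1) * (sin t)^2 + \<sigma> - 1))"
    unfolding integral_oval_sin_substitution[OF A \<sigma>] using sqrt2_times by (simp only: mult.assoc)
  finally show ?thesis .
qed

lemma I0_ext_of_real:
  assumes h: "h > 0"
  shows "I0_ext (of_real h) = of_real (I0 h)"
proof -
  define \<sigma> where "\<sigma> = sqrt (1 + 4 * h)"
  let ?w = "\<lambda>t. (\<sigma> + 1) * (sin t)^2 + \<sigma> - 1"
  have "\<sigma> > 1"
    unfolding \<sigma>_def using h by simp
  then have "?w t \<ge> 0" for t
    by (smt (verit) zero_le_power2 mult_nonneg_nonneg)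
  moreover have "radicand (of_real \<sigma>) t = of_real (?w t)" for t
    unfolding radicand_def by simp
  ultimately have csqrt_eq: "csqrt (radicand (of_real \<sigma>) t) = of_real (sqrt (?w t))" for t
    by simp
  have "((\<lambda>t. (cos t)^2 * sqrt (?w t)) has_integral integral {-(pi/2)..pi/2} (\<lambda>t. (cos t)^2 * sqrt (?w t)))
      {-(pi/2)..pi/2}"
    by (intro integrable_integral integrable_continuous_interval continuous_intros)
  from has_integral_of_real[OF this]
  have "J (of_real \<sigma>) = of_real (integral {-(pi/2)..pi/2} (\<lambda>t. (cos t)^2 * sqrt (?w t)))"
    unfolding J_def csqrt_eq of_real_mult by (rule integral_unique)
  then show ?thesis
    unfolding I0_ext_def sqrt_disc_of_real[OF h] I0_eq_integral[OF h] \<sigma>_def[symmetric] by simp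
qed

theorem lemma3:
  shows "(\<exists>f. f holomorphic_on slitD \<and> (\<forall>h::real. h > 0 \<longrightarrow> f (complex_of_real h) = complex_of_real (I0 h)))
    \<and> (\<forall>f. f holomorphic_on slitD \<and> (\<forall>h::real. h > 0 \<longrightarrow> f (complex_of_real h) = complex_of_real (I0 h))
          \<longrightarrow> (\<forall>z\<in>slitD. f z \<noteq> 0 \<and> deriv f z \<noteq> 0))"
proof (intro conjI allI impI ballI)
  show "\<exists>f. f holomorphic_on slitD \<and> (\<forall>h::real. h > 0 \<longrightarrow> f (of_real h) = of_real (I0 h))"
    using holomorphic_on_I0_ext I0_ext_of_real by blast
next
  fix f z
  assume f: "f holomorphic_on slitD \<and> (\<forall>h::real. h > 0 \<longrightarrow> f (of_real h) = of_real (I0 h))"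
    and z: "z \<in> slitD"
  have f_eq: "f w = I0_ext w" if "w \<in> slitD" for w
  proof (rule holomorphic_on_slitD_eqI[where f = f and g = I0_ext])
    show "f (of_real h) = I0_ext (of_real h)" if "h > 0" for h :: real
      using f that by (simp add: I0_ext_of_real)
  qed (use f holomorphic_on_I0_ext that in simp_all)
  show "f z \<noteq> 0"
    using f_eq[OF z] I0_ext_nonzero[OF z] by simp
  have "(f has_field_derivative of_real (sqrt 2) * (2 * P (sqrt_disc z))) (at z)"
    using has_field_derivative_I0_ext[OF z] open_slitD z
    by (rule has_field_derivative_transform_within_open) (simp add: f_eq)
  then have "deriv f z = of_real (sqrt 2) * (2 * P (sqrt_disc z))"
    by (rule DERIV_imp_deriv)
  moreover have "P (sqrt_disc z) \<noteq> 0"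
    using Re_P_pos[OF sqrt_disc_in_slit_one[OF z]] by auto
  ultimately show "deriv f z \<noteq> 0"
    by simp
qed

end
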